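(* Let $X$ be a real Banach space, let $A\subset X\times X^*$ be self-cancelling and suppose $A^\vdash$ is monotone. Then $A^\vdash$ is maximal monotone.
   Context: $\langle x,x^*\rangle=x^*(x)$. $A$ is self-cancelling if it is a linear subspace of $X\times X^*$ with $\langle x,x^*\rangle=0$ for all $(x,x^* )\in A$. $B^\vdash=\{(y,y^* )\mid \langle x,y^*\rangle+\langle y,x^*\rangle=0\ \forall (x,x^* )\in B\}$. A set $T\subset X\times X^*$ is monotone if $\langle x-y,x^*-y^*\rangle\ge0$ for all $(x,x^* ),(y,y^* )\in T$, and maximal monotone if it is monotone and not properly contained in any monotone set. *)

theory Defs
  imports "HOL-Analysis.Analysis"
begin

definition pairing :: "'a::real_normed_vector \<Rightarrow> ('a \<Rightarrow>\<^sub>L real) \<Rightarrow> real" where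
  "pairing x xs = blinfun_apply xs x"

definition self_cancelling :: "('a::real_normed_vector \<times> ('a \<Rightarrow>\<^sub>L real)) set \<Rightarrow> bool" where
  "self_cancelling A \<longleftrightarrow> subspace A \<and> (\<forall>(x, xs) \<in> A. pairing x xs = 0)"

definition perp_set :: "('a::real_normed_vector \<times> ('a \<Rightarrow>\<^sub>L real)) set
    \<Rightarrow> ('a \<times> ('a \<Rightarrow>\<^sub>L real)) set" where
  "perp_set B = {(y, ys). \<forall>(x, xs) \<in> B. pairing x ys + pairing y xs = 0}"

definition monotone_set :: "('a::real_normed_vector \<times> ('a \<Rightarrow>\<^sub>L real)) set \<Rightarrow> bool" where
  "monotone_set T \<longleftrightarrow>
     (\<forall>(x, xs) \<in> T. \<forall>(y, ys) \<in> T. pairing (x - y) (xs - ys) \<ge> 0)"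

definition maximal_monotone :: "('a::real_normed_vector \<times> ('a \<Rightarrow>\<^sub>L real)) set \<Rightarrow> bool" where
  "maximal_monotone T \<longleftrightarrow>
     monotone_set T \<and> (\<forall>S. monotone_set S \<and> T \<subseteq> S \<longrightarrow> S = T)"

end

theory Submission
  imports Defs
begin

text \<open>A self-cancelling subspace is contained in its own annihilator \<open>A\<^sup>\<turnstile>\<close> by polarization.
Conversely, any monotone set \<open>S\<close> containing \<open>A\<close> lies in \<open>A\<^sup>\<turnstile>\<close>: for \<open>(z, z\<^sup>*) \<in> S\<close> and
\<open>(a, a\<^sup>*) \<in> A\<close>, monotonicity against the whole line \<open>t(a, a\<^sup>*) \<subseteq> A\<close> gives
\<open>\<langle>z, z\<^sup>*\<rangle> - t(\<langle>z, a\<^sup>*\<rangle> + \<langle>a, z\<^sup>*\<rangle>) \<ge> 0\<close> for all real \<open>t\<close>, forcing the coefficient of \<open>t\<close>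
to vanish. Hence every monotone extension of a monotone \<open>A\<^sup>\<turnstile>\<close> equals \<open>A\<^sup>\<turnstile>\<close>.\<close>

lemma slope_eq_0_if_affine_nonneg:
  fixes c d :: real
  assumes "\<And>t. c - t * d \<ge> 0"
  shows "d = 0"
proof (rule ccontr)
  assume "d \<noteq> 0"
  have "c - ((c + 1) / d) * d \<ge> 0" by (rule assms)
  with \<open>d \<noteq> 0\<close> show False by simp
qed

lemma self_cancelling_pairing_eq_0:
  assumes "self_cancelling A" and "(x, xs) \<in> A"
  shows "pairing x xs = 0"
  using assms unfolding self_cancelling_def by auto

lemma self_cancelling_subset_perp_set:
  assumes A: "self_cancelling A"
  shows "A \<subseteq> perp_set A"
proof clarify
  fix y ys assume yA: "(y, ys) \<in> A"
  have "pairing x ys + pairing y xs = 0" if xA: "(x, xs) \<in> A" for x xs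
  proof -
    have "(x + y, xs + ys) \<in> A"
      using subspace_add[OF _ xA yA] A unfolding self_cancelling_def by simp
    then have "pairing (x + y) (xs + ys) = 0"
      by (rule self_cancelling_pairing_eq_0[OF A])
    with self_cancelling_pairing_eq_0[OF A xA] self_cancelling_pairing_eq_0[OF A yA]
    show ?thesis
      by (simp add: pairing_def blinfun.add_left blinfun.add_right)
  qed
  then show "(y, ys) \<in> perp_set A"
    unfolding perp_set_def by auto
qed

lemma monotone_superset_subset_perp_set:
  assumes A: "self_cancelling A" and S: "monotone_set S" and "A \<subseteq> S"
  shows "S \<subseteq> perp_set A"
proof clarify
  fix z zs assume zS: "(z, zs) \<in> S"
  have "pairing a zs + pairing z as = 0" if aA: "(a, as) \<in> A" for a as
  proof (rule slope_eq_0_if_affine_nonneg)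
    fix t :: real
    have "(t *\<^sub>R a, t *\<^sub>R as) \<in> A"
      using subspace_scale[OF _ aA, of t] A unfolding self_cancelling_def by simp
    with \<open>A \<subseteq> S\<close> have "pairing (z - t *\<^sub>R a) (zs - t *\<^sub>R as) \<ge> 0"
      using S zS unfolding monotone_set_def by fastforce
    with self_cancelling_pairing_eq_0[OF A aA]
    show "pairing z zs - t * (pairing a zs + pairing z as) \<ge> 0"
      by (simp add: pairing_def blinfun.diff_left blinfun.diff_right
          blinfun.scaleR_left blinfun.scaleR_right algebra_simps)
  qed
  then show "(z, zs) \<in> perp_set A"
    unfolding perp_set_def by auto
qed

theorem lemma4:
  fixes A :: "('a::banach \<times> ('a \<Rightarrow>\<^sub>L real)) set"
  assumes "self_cancelling A"
    and "monotone_set (perp_set A)"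
  shows "maximal_monotone (perp_set A)"
proof -
  have "S = perp_set A" if "monotone_set S" and "perp_set A \<subseteq> S" for S
    using monotone_superset_subset_perp_set[OF assms(1) \<open>monotone_set S\<close>]
      self_cancelling_subset_perp_set[OF assms(1)] that(2)
    by blast
  with assms(2) show ?thesis
    unfolding maximal_monotone_def by blast
qed

end
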